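(* For any integers $n>m\ge1$, there is no algorithm for SSP (on instances with $n$ jobs and $m$ machines) that is $1$-consistent and $\frac{n-m+1}{\lceil n/m\rceil}$-robust, even in the case where all jobs have equal processing times. In particular, for $m=n/2$, there is no algorithm that is $1$-consistent and $o(n)$-robust.
   Context: Scheduling with Speed Predictions (SSP). An instance consists of $n$ jobs with processing times $p_1,\dots,p_n\ge 0$ and $m$ machines with true speeds $s_1,\dots,s_m>0$; processing job $j$ on machine $i$ takes time $p_j/s_i$. In the partitioning stage the algorithm receives $\mathbf p$ and predicted speeds $\hat{\mathbf s}\ge 0$ (not $\mathbf s$) and partitions the jobs into $m$ possibly empty bags. In the scheduling stage $\mathbf s$ is revealed and each bag is assigned whole to a machine; the makespan is the maximum over machines $i$ of (total processing time assigned to $i$)$/s_i$. $opt(\mathbf p,\mathbf s)$ is the minimum makespan of assigning individual jobs knowing $\mathbf s$; $alg(\mathbf p,\hat{\mathbf s},\mathbf s)$ is the algorithm's makespan. An algorithm is $c$-consistent if $alg(\mathbf p,\mathbf s,\mathbf s)\le c\cdot opt(\mathbf p,\mathbf s)$ for all $\mathbf p,\mathbf s$, and $\beta$-robust if $alg(\mathbf p,\hat{\mathbf s},\mathbf s)\le \beta\cdot opt(\mathbf p,\mathbf s)$ for all $\mathbf p,\hat{\mathbf s},\mathbf s$. *)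

theory Defs
  imports Complex_Main "HOL-Library.FuncSet"
begin

text \<open>Jobs are indexed by 0..<n, machines by 0..<m. Processing times and
(true/predicted) speeds are functions nat => real; only indices below n resp. m matter (other values are ignored).\<close>

definition makespan :: "nat \<Rightarrow> nat \<Rightarrow> (nat \<Rightarrow> real) \<Rightarrow> (nat \<Rightarrow> real) \<Rightarrow> (nat \<Rightarrow> nat) \<Rightarrow> real" where
  "makespan n m p s f = Max ((\<lambda>i. (\<Sum>j\<in>{j. j < n \<and> f j = i}. p j) / s i) ` {..<m})"

definition opt :: "nat \<Rightarrow> nat \<Rightarrow> (nat \<Rightarrow> real) \<Rightarrow> (nat \<Rightarrow> real) \<Rightarrow> real" where
  "opt n m p s = Min (makespan n m p s ` ({..<n} \<rightarrow>\<^sub>E {..<m}))"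

text \<open>An algorithm is a pair (part, assign): part p shat gives for every job its bag
(bags are 0..<m); assign p shat s gives for every bag the machine it is placed on.\<close>
definition valid_alg :: "nat \<Rightarrow> nat \<Rightarrow>
    ((nat \<Rightarrow> real) \<Rightarrow> (nat \<Rightarrow> real) \<Rightarrow> nat \<Rightarrow> nat) \<Rightarrow>
    ((nat \<Rightarrow> real) \<Rightarrow> (nat \<Rightarrow> real) \<Rightarrow> (nat \<Rightarrow> real) \<Rightarrow> nat \<Rightarrow> nat) \<Rightarrow> bool" where
  "valid_alg n m part assign \<longleftrightarrow>
     (\<forall>p shat. \<forall>j<n. part p shat j < m) \<and>
     (\<forall>p shat s. \<forall>b<m. assign p shat s b < m)"

definition alg :: "nat \<Rightarrow> nat \<Rightarrow>
    ((nat \<Rightarrow> real) \<Rightarrow> (nat \<Rightarrow> real) \<Rightarrow> nat \<Rightarrow> nat) \<Rightarrow>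
    ((nat \<Rightarrow> real) \<Rightarrow> (nat \<Rightarrow> real) \<Rightarrow> (nat \<Rightarrow> real) \<Rightarrow> nat \<Rightarrow> nat) \<Rightarrow>
    (nat \<Rightarrow> real) \<Rightarrow> (nat \<Rightarrow> real) \<Rightarrow> (nat \<Rightarrow> real) \<Rightarrow> real" where
  "alg n m part assign p shat s = makespan n m p s (\<lambda>j. assign p shat s (part p shat j))"

definition equal_jobs :: "nat \<Rightarrow> (nat \<Rightarrow> real) \<Rightarrow> bool" where
  "equal_jobs n p \<longleftrightarrow> (\<exists>c\<ge>0. \<forall>j<n. p j = c)"

definition pos_speeds :: "nat \<Rightarrow> (nat \<Rightarrow> real) \<Rightarrow> bool" where
  "pos_speeds m s \<longleftrightarrow> (\<forall>i<m. s i > 0)"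

definition nonneg_speeds :: "nat \<Rightarrow> (nat \<Rightarrow> real) \<Rightarrow> bool" where
  "nonneg_speeds m s \<longleftrightarrow> (\<forall>i<m. s i \<ge> 0)"

definition consistent_eq where
  "consistent_eq n m part assign c \<longleftrightarrow>
     (\<forall>p s. equal_jobs n p \<longrightarrow> pos_speeds m s \<longrightarrow>
        alg n m part assign p s s \<le> c * opt n m p s)"

definition robust_eq where
  "robust_eq n m part assign \<beta> \<longleftrightarrow>
     (\<forall>p shat s. equal_jobs n p \<longrightarrow> nonneg_speeds m shat \<longrightarrow> pos_speeds m s \<longrightarrow>
        alg n m part assign p shat s \<le> \<beta> * opt n m p s)"

end

theory Submission
  imports Defs
begin

text \<open>Take \<open>n\<close> unit jobs and predict speed \<open>n - m + 1\<close> for machine 0 and speed 1 for the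
  others. If the prediction is correct, the optimum is 1, so a 1-consistent algorithm must put
  \<open>n - m + 1\<close> jobs on machine 0 and one job on every other machine. These \<open>m - 1\<close> single
  jobs lie in distinct bags, which leaves a single bag for the \<open>n - m + 1\<close> jobs of machine 0.
  If all true speeds are 1, this bag alone has load \<open>n - m + 1\<close>, whereas the optimum is
  \<open>\<lceil>n / m\<rceil>\<close>.\<close>

definition jobs_on :: "nat \<Rightarrow> (nat \<Rightarrow> nat) \<Rightarrow> nat \<Rightarrow> nat set" where
  "jobs_on n f i = {j. j < n \<and> f j = i}"

lemma finite_jobs_on [simp]: "finite (jobs_on n f i)"
  by (simp add: jobs_on_def)

lemma equal_jobs_const: "0 \<le> c \<Longrightarrow> equal_jobs n (\<lambda>_. c)"
  by (auto simp: equal_jobs_def)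

lemma pos_speeds_const: "0 < c \<Longrightarrow> pos_speeds m (\<lambda>_. c)"
  by (simp add: pos_speeds_def)

lemma load_le_makespan:
  assumes "i < m"
  shows "sum p (jobs_on n f i) / s i \<le> makespan n m p s f"
  unfolding makespan_def jobs_on_def using assms by (intro Max_ge) auto

lemma makespan_leI:
  assumes "1 \<le> m" and "\<And>i. i < m \<Longrightarrow> sum p (jobs_on n f i) / s i \<le> c"
  shows "makespan n m p s f \<le> c"
  unfolding makespan_def using assms by (subst Max_le_iff) (auto simp: jobs_on_def lessThan_empty_iff)

lemma opt_leI:
  assumes "f \<in> {..<n} \<rightarrow>\<^sub>E {..<m}" and "makespan n m p s f \<le> c"
  shows "opt n m p s \<le> c"
proof -
  have "opt n m p s \<le> makespan n m p s f"
    unfolding opt_def using assms(1) by (intro Min_le) (auto intro: finite_PiE)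
  with assms(2) show ?thesis
    by linarith
qed

lemma opt_nonneg:
  assumes "1 \<le> m" and "\<And>j. j < n \<Longrightarrow> 0 \<le> p j" and "\<And>i. i < m \<Longrightarrow> 0 < s i"
  shows "0 \<le> opt n m p s"
proof -
  have "0 \<le> makespan n m p s f" for f
  proof -
    have "0 \<le> sum p (jobs_on n f 0) / s 0"
      using assms by (intro divide_nonneg_pos sum_nonneg) (auto simp: jobs_on_def)
    also have "\<dots> \<le> makespan n m p s f"
      using assms(1) by (intro load_le_makespan) simp
    finally show ?thesis .
  qed
  moreover have "{..<n} \<rightarrow>\<^sub>E {..<m} \<noteq> {}"
    using assms(1) by (auto simp: PiE_eq_empty_iff lessThan_empty_iff)
  ultimately show ?thesis
    unfolding opt_def by (subst Min_ge_iff) (auto intro: finite_PiE)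
qed

lemma card_jobs_on_le_of_makespan_le:
  assumes "makespan n m (\<lambda>_. 1) s f \<le> c" and "i < m" and "0 < s i"
  shows "real (card (jobs_on n f i)) \<le> c * s i"
  using load_le_makespan[OF assms(2), of "\<lambda>_. 1" n f s] assms
  by (simp add: divide_le_eq order_trans mult_right_mono)

lemma bag_load_le_alg:
  assumes "valid_alg n m part assign" and "b < m"
    and "\<And>j. j < n \<Longrightarrow> 0 \<le> p j" and "pos_speeds m s"
  shows "sum p (jobs_on n (part p shat) b) / s (assign p shat s b) \<le> alg n m part assign p shat s"
proof -
  let ?M = "assign p shat s b"
  have M: "?M < m"
    using assms(1,2) by (simp add: valid_alg_def)
  have "sum p (jobs_on n (part p shat) b) \<le> sum p (jobs_on n (\<lambda>j. assign p shat s (part p shat j)) ?M)"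
    using assms(3) by (intro sum_mono2) (auto simp: jobs_on_def)
  then have "sum p (jobs_on n (part p shat) b) / s ?M
      \<le> sum p (jobs_on n (\<lambda>j. assign p shat s (part p shat j)) ?M) / s ?M"
    using M assms(4) by (intro divide_right_mono) (auto simp: pos_speeds_def less_imp_le)
  also have "\<dots> \<le> alg n m part assign p shat s"
    unfolding alg_def using M by (rule load_le_makespan)
  finally show ?thesis .
qed

lemma opt_unit_jobs_le:
  assumes "1 \<le> m" and "n \<le> k * m"
  shows "opt n m (\<lambda>_. 1) (\<lambda>_. 1) \<le> real k"
proof -
  define f where "f = restrict (\<lambda>j. j div k) {..<n}"
  have "f \<in> {..<n} \<rightarrow>\<^sub>E {..<m}"
    using assms(2) by (auto simp: f_def less_mult_imp_div_less mult.commute)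
  moreover have "makespan n m (\<lambda>_. 1) (\<lambda>_. 1) f \<le> real k"
  proof (rule makespan_leI[OF assms(1)])
    fix i
    have "jobs_on n f i \<subseteq> {i * k..<i * k + k}"
    proof
      fix j assume "j \<in> jobs_on n f i"
      then have "j < k * m" and "j div k = i"
        using assms(2) by (auto simp: jobs_on_def f_def)
      have "i * k + j mod k = j"
        using \<open>j div k = i\<close> div_mult_mod_eq[of j k] by simp
      moreover have "j mod k < k"
        using \<open>j < k * m\<close> by (intro mod_less_divisor) (cases k, simp_all)
      ultimately show "j \<in> {i * k..<i * k + k}"
        unfolding atLeastLessThan_iff by (intro conjI) linarith+
    qed
    then show "sum (\<lambda>_. 1) (jobs_on n f i) / 1 \<le> real k"
      using card_mono[of "{i * k..<i * k + k}"] by simp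
  qed
  ultimately show ?thesis
    by (rule opt_leI)
qed

lemma opt_unit_jobs_le_ceiling:
  assumes "1 \<le> m"
  shows "opt n m (\<lambda>_. 1) (\<lambda>_. 1) \<le> real_of_int \<lceil>real n / real m\<rceil>"
proof -
  define k where "k = nat \<lceil>real n / real m\<rceil>"
  have k: "real k = real_of_int \<lceil>real n / real m\<rceil>"
    unfolding k_def using assms by simp
  have "real n / real m \<le> real k"
    unfolding k by (rule le_of_int_ceiling)
  then have "real n \<le> real k * real m"
    using assms by (simp add: divide_le_eq)
  then have "n \<le> k * m"
    by (simp flip: of_nat_mult)
  with assms show ?thesis
    unfolding k[symmetric] by (rule opt_unit_jobs_le)
qed

definition skewed_speeds :: "nat \<Rightarrow> nat \<Rightarrow> nat \<Rightarrow> real" where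
  "skewed_speeds n m i = (if i = 0 then real (n - m + 1) else 1)"

lemma pos_speeds_skewed_speeds: "pos_speeds m (skewed_speeds n m)"
  by (simp add: pos_speeds_def skewed_speeds_def)

lemma nonneg_speeds_skewed_speeds: "nonneg_speeds m (skewed_speeds n m)"
  by (simp add: nonneg_speeds_def skewed_speeds_def)

lemma opt_unit_jobs_skewed_speeds_le_1:
  assumes "1 \<le> m"
  shows "opt n m (\<lambda>_. 1) (skewed_speeds n m) \<le> 1"
proof -
  \<comment> \<open>Truncated subtraction sends jobs \<open>0..n - m\<close> to machine 0 and job \<open>n - m + i\<close> to machine \<open>i\<close>.\<close>
  define f where "f = restrict (\<lambda>j. j - (n - m)) {..<n}"
  have "f \<in> {..<n} \<rightarrow>\<^sub>E {..<m}"
    using assms by (auto simp: f_def)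
  moreover have "makespan n m (\<lambda>_. 1) (skewed_speeds n m) f \<le> 1"
  proof (rule makespan_leI[OF assms])
    fix i
    show "sum (\<lambda>_. 1) (jobs_on n f i) / skewed_speeds n m i \<le> 1"
    proof (cases "i = 0")
      case True
      then have "jobs_on n f i \<subseteq> {..n - m}"
        by (auto simp: jobs_on_def f_def)
      with True show ?thesis
        using card_mono[of "{..n - m}" "jobs_on n f i"] by (simp add: skewed_speeds_def)
    next
      case False
      then have "jobs_on n f i \<subseteq> {i + (n - m)}"
        by (auto simp: jobs_on_def f_def)
      with False show ?thesis
        using card_mono[of "{i + (n - m)}" "jobs_on n f i"] by (simp add: skewed_speeds_def)
    qed
  qed
  ultimately show ?thesis
    by (rule opt_leI)
qed

lemma inj_on_if_card_jobs_on_le_1: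
  assumes "\<And>i. i \<in> I \<Longrightarrow> card (jobs_on n g i) \<le> 1"
  shows "inj_on g {j. j < n \<and> g j \<in> I}"
proof (rule inj_onI)
  fix a b
  assume "a \<in> {j. j < n \<and> g j \<in> I}" and "b \<in> {j. j < n \<and> g j \<in> I}" and "g a = g b"
  then have "a \<in> jobs_on n g (g a)" and "b \<in> jobs_on n g (g a)" and "card (jobs_on n g (g a)) \<le> 1"
    using assms by (auto simp: jobs_on_def)
  then show "a = b"
    by (auto simp: card_le_Suc0_iff_eq)
qed

lemma exists_large_bag_if_tight_loads:
  fixes part assign :: "nat \<Rightarrow> nat"
  assumes "1 \<le> m" and "m \<le> n"
    and part: "\<And>j. j < n \<Longrightarrow> part j < m"
    and assign: "\<And>b. b < m \<Longrightarrow> assign b < m"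
    and load_0: "card (jobs_on n (\<lambda>j. assign (part j)) 0) \<le> n - m + 1"
    and load: "\<And>i. 0 < i \<Longrightarrow> i < m \<Longrightarrow> card (jobs_on n (\<lambda>j. assign (part j)) i) \<le> 1"
  shows "\<exists>b<m. n - m + 1 \<le> card (jobs_on n part b)"
proof -
  define g where "g = (\<lambda>j. assign (part j))"
  define J0 where "J0 = jobs_on n g 0"
  define R where "R = {j. j < n \<and> g j \<in> {1..<m}}"
  have inj_R: "inj_on g R"
    unfolding R_def g_def using load by (intro inj_on_if_card_jobs_on_le_1) auto
  have "J0 \<union> R = {..<n}" and disjoint: "J0 \<inter> R = {}"
    using part assign by (auto simp: J0_def R_def jobs_on_def g_def Suc_le_eq)
  then have "card J0 + card R = n"
    by (metis card_Un_disjoint card_lessThan finite_Un finite_lessThan)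
  moreover have "card R \<le> m - 1"
    using card_inj_on_le[OF inj_R, of "{1..<m}"] by (force simp: R_def)
  ultimately have card_J0: "card J0 = n - m + 1" and card_R: "card R = m - 1"
    using load_0 assms(1,2) unfolding J0_def g_def by linarith+
  have "card (part ` R) = m - 1"
    using inj_on_imageI2[of assign part R] inj_R card_R by (simp add: card_image g_def comp_def)
  moreover have "part ` J0 \<inter> part ` R = {}"
    using disjoint by (auto simp: J0_def R_def jobs_on_def g_def)
  moreover have "part ` J0 \<union> part ` R \<subseteq> {..<m}"
    using part by (auto simp: J0_def R_def jobs_on_def)
  ultimately have "card (part ` J0) \<le> 1"
    using card_mono[of "{..<m}" "part ` J0 \<union> part ` R"]
    by (simp add: card_Un_disjoint J0_def R_def)
  moreover have "0 < card (part ` J0)"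
    using card_J0 by (auto simp: card_gt_0_iff J0_def)
  ultimately obtain b where "part ` J0 = {b}"
    by (metis card_1_singletonE le_antisym Suc_leI One_nat_def)
  then have "b < m" and "J0 \<subseteq> jobs_on n part b"
    using part by (force simp: J0_def jobs_on_def)+
  then show ?thesis
    using card_J0 card_mono[of "jobs_on n part b" J0] by auto
qed

lemma consistent_alg_has_large_bag:
  assumes valid: "valid_alg n m part assign" and consistent: "consistent_eq n m part assign 1"
    and "1 \<le> m" and "m \<le> n"
  shows "\<exists>b<m. n - m + 1 \<le> card (jobs_on n (part (\<lambda>_. 1) (skewed_speeds n m)) b)"
proof -
  let ?shat = "skewed_speeds n m"
  let ?part = "part (\<lambda>_. 1) ?shat" and ?assign = "assign (\<lambda>_. 1) ?shat ?shat"
  have "alg n m part assign (\<lambda>_. 1) ?shat ?shat \<le> 1 * opt n m (\<lambda>_. 1) ?shat"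
    using consistent[unfolded consistent_eq_def] equal_jobs_const[of 1] pos_speeds_skewed_speeds
    by simp
  also have "\<dots> \<le> 1"
    using opt_unit_jobs_skewed_speeds_le_1[OF \<open>1 \<le> m\<close>] by simp
  finally have makespan: "makespan n m (\<lambda>_. 1) ?shat (\<lambda>j. ?assign (?part j)) \<le> 1"
    by (simp add: alg_def)
  have "\<And>j. j < n \<Longrightarrow> ?part j < m" and "\<And>b. b < m \<Longrightarrow> ?assign b < m"
    using valid by (simp_all add: valid_alg_def)
  moreover have "card (jobs_on n (\<lambda>j. ?assign (?part j)) 0) \<le> n - m + 1"
    using card_jobs_on_le_of_makespan_le[OF makespan, of 0] \<open>1 \<le> m\<close>
    by (simp add: skewed_speeds_def)
  moreover have "card (jobs_on n (\<lambda>j. ?assign (?part j)) i) \<le> 1" if "0 < i" and "i < m" for i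
    using card_jobs_on_le_of_makespan_le[OF makespan \<open>i < m\<close>] that
    by (simp add: skewed_speeds_def)
  ultimately show ?thesis
    by (rule exists_large_bag_if_tight_loads[OF assms(3,4)])
qed

lemma le_mult_of_bounded_factor:
  fixes x \<beta> y c :: real
  assumes "x \<le> \<beta> * y" and "0 < x" and "0 \<le> y" and "y \<le> c"
  shows "x \<le> \<beta> * c"
proof -
  have "0 < \<beta> * y"
    using assms(1,2) by linarith
  with \<open>0 \<le> y\<close> have "0 < \<beta>"
    by (auto simp: zero_less_mult_iff)
  then show ?thesis
    using assms(1,4) by (meson mult_left_mono less_imp_le order_trans)
qed

theorem proposition1:
  fixes n m :: nat and \<beta> :: real
  assumes "1 \<le> m" and "m < n"
    and "\<beta> < real (n - m + 1) / real_of_int \<lceil>real n / real m\<rceil>"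
  shows "\<not> (\<exists>part assign. valid_alg n m part assign \<and>
              consistent_eq n m part assign 1 \<and>
              robust_eq n m part assign \<beta>)"
proof
  assume "\<exists>part assign. valid_alg n m part assign \<and>
              consistent_eq n m part assign 1 \<and>
              robust_eq n m part assign \<beta>"
  then obtain part assign where valid: "valid_alg n m part assign"
    and consistent: "consistent_eq n m part assign 1" and robust: "robust_eq n m part assign \<beta>"
    by blast
  obtain b where "b < m"
    and large: "n - m + 1 \<le> card (jobs_on n (part (\<lambda>_. 1) (skewed_speeds n m)) b)"
    using consistent_alg_has_large_bag[OF valid consistent assms(1)] assms(2) by auto
  have "real (n - m + 1) \<le> real (card (jobs_on n (part (\<lambda>_. 1) (skewed_speeds n m)) b))"
    using large by (rule of_nat_mono)
  also have "\<dots> \<le> alg n m part assign (\<lambda>_. 1) (skewed_speeds n m) (\<lambda>_. 1)"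
    using bag_load_le_alg[OF valid \<open>b < m\<close>, of "\<lambda>_. 1" "\<lambda>_. 1"] by (simp add: pos_speeds_const)
  also have "\<dots> \<le> \<beta> * opt n m (\<lambda>_. 1) (\<lambda>_. 1)"
    using robust[unfolded robust_eq_def] equal_jobs_const[of 1] nonneg_speeds_skewed_speeds
      pos_speeds_const[of 1]
    by simp
  finally have "real (n - m + 1) \<le> \<beta> * real_of_int \<lceil>real n / real m\<rceil>"
    by (rule le_mult_of_bounded_factor)
      (auto intro: opt_nonneg[OF assms(1)] opt_unit_jobs_le_ceiling[OF assms(1)])
  moreover have "0 < real_of_int \<lceil>real n / real m\<rceil>"
    using assms(1,2) by simp
  ultimately show False
    using assms(3) by (simp add: pos_less_divide_eq)
qed

end
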